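(* If for every $k\in\mathbb{N}$ there is a vertex $v_k\in V(G)$ lying on $k$ pairwise edge-disjoint cycles of $G$, then $G$ is $\omega$-evadible.
   Context: Cat Herding is played on a simple, possibly infinite graph $G$. The cat first places its token on a vertex. Then the players alternate, the herder moving first: the herder deletes one edge of the current graph, and then, unless the cat's current vertex has degree $0$ in the current graph, the cat moves its token along a finite path with at least one edge in the current graph to a different vertex. The cat is captured when its vertex has degree $0$ in the current graph. $G$ is $k$-evadible if the cat has a strategy (including its choice of starting vertex) that, against every herder strategy, yields a legal cat move after each of the first $k-1$ edge deletions; $G$ is $\omega$-evadible if it is $k$-evadible for every $k\in\mathbb{N}$. *)

theory Defs
  imports Main
begin

definition simple_graph :: "'a set \<Rightarrow> 'a set set \<Rightarrow> bool" where
  "simple_graph V E \<longleftrightarrow> (\<forall>e\<in>E. \<exists>u v. u \<noteq> v \<and> u \<in> V \<and> v \<in> V \<and> e = {u, v})"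

definition adj :: "'a set set \<Rightarrow> ('a \<times> 'a) set" where
  "adj E = {(u, v). {u, v} \<in> E \<and> u \<noteq> v}"

definition is_cycle :: "'a set set \<Rightarrow> 'a list \<Rightarrow> bool" where
  "is_cycle E c \<longleftrightarrow> length c \<ge> 3 \<and> distinct c \<and>
     (\<forall>i < length c. {c ! i, c ! ((i + 1) mod length c)} \<in> E)"

definition cycle_edges :: "'a list \<Rightarrow> 'a set set" where
  "cycle_edges c = {{c ! i, c ! ((i + 1) mod length c)} | i. i < length c}"

(* A cat strategy is a function sigma from the history of deleted edges (in order) to
   the cat's position; sigma [] is the starting vertex.  Herder strategies
   range over all legal deletion sequences (distinct edges of the graph, each an edge of the
   current graph at its time); since the cat strategy may depend on the whole history,
   "against every herder strategy" amounts to "against every legal deletion sequence". *)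
definition k_evadible :: "'a set \<Rightarrow> 'a set set \<Rightarrow> nat \<Rightarrow> bool" where
  "k_evadible V E k \<longleftrightarrow> (\<exists>\<sigma> :: 'a set list \<Rightarrow> 'a. \<sigma> [] \<in> V \<and>
     (\<forall>es. es \<noteq> [] \<and> length es \<le> k - 1 \<and> distinct es \<and> set es \<subseteq> E \<longrightarrow>
        \<sigma> es \<noteq> \<sigma> (butlast es) \<and> (\<sigma> (butlast es), \<sigma> es) \<in> (adj (E - set es))\<^sup>*))"

definition omega_evadible :: "'a set \<Rightarrow> 'a set set \<Rightarrow> bool" where
  "omega_evadible V E \<longleftrightarrow> (\<forall>k. k_evadible V E k)"

end

theory Submission
  imports Defs
begin

(* The cat waits at a vertex v through which there are k edge-disjoint cycles. Before each
   of its odd-numbered moves fewer than k edges have been deleted, so by pigeonhole one of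
   the cycles is still intact, and the cat steps to another vertex of it; in the next round
   the herder deletes only one more edge, and a cycle minus one edge is still connected, so
   the cat can walk back to v. *)

definition cycle_edge :: "'a list \<Rightarrow> nat \<Rightarrow> 'a set" where
  "cycle_edge c i = {c ! i, c ! (Suc i mod length c)}"

lemma cycle_edges_eq_image: "cycle_edges c = cycle_edge c ` {..<length c}"
  by (auto simp: cycle_edges_def cycle_edge_def)

lemma sym_adj: "sym (adj E)"
  by (auto simp: adj_def sym_def insert_commute)

lemma set_eq_insert_last_butlast: "xs \<noteq> [] \<Longrightarrow> set xs = insert (last xs) (set (butlast xs))"
  by (metis append_butlast_last_id insert_is_Un set_append set_simps sup_commute)

lemma exists_disjoint_from_small_set:
  assumes disj: "\<forall>i<k. \<forall>j<k. i \<noteq> j \<longrightarrow> A i \<inter> A j = {}"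
    and S: "finite S" "card S < k"
  shows "\<exists>i<k. A i \<inter> S = {}"
proof (rule ccontr)
  assume "\<not> ?thesis"
  then have "\<forall>i. \<exists>x. i < k \<longrightarrow> x \<in> A i \<inter> S"
    by blast
  then obtain f where f: "\<And>i. i < k \<Longrightarrow> f i \<in> A i \<inter> S"
    by metis
  have "inj_on f {..<k}"
  proof (rule inj_onI)
    fix i j assume "i \<in> {..<k}" "j \<in> {..<k}" "f i = f j"
    then have "f i \<in> A i \<inter> A j" "i < k" "j < k"
      using f[of i] f[of j] by auto
    then show "i = j"
      using disj by auto
  qed
  moreover have "f ` {..<k} \<subseteq> S"
    using f by auto
  ultimately have "card {..<k} \<le> card S"
    using card_inj_on_le S(1) by blast
  with S(2) show False
    by simp
qed

lemma cycle_consecutive_vertices_neq: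
  assumes "is_cycle E c" "i < length c"
  shows "c ! i \<noteq> c ! (Suc i mod length c)"
proof -
  have c: "length c \<ge> 3" "distinct c" using assms(1) by (auto simp: is_cycle_def)
  have "i \<noteq> Suc i mod length c"
    using assms(2) c(1) by (cases "Suc i = length c") auto
  moreover have "Suc i mod length c < length c"
    using assms(2) mod_less_divisor[of "length c" "Suc i"] by linarith
  ultimately show ?thesis
    using assms(2) c by (simp add: nth_eq_iff_index_eq)
qed

lemma cycle_edge_in_adj:
  assumes "is_cycle E c" "i < length c" "cycle_edge c i \<notin> D"
  shows "(c ! i, c ! (Suc i mod length c)) \<in> adj (E - D)"
  using assms cycle_consecutive_vertices_neq[OF assms(1,2)]
  by (auto simp: adj_def is_cycle_def cycle_edge_def)

lemma inj_on_cycle_edge: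
  assumes "is_cycle E c"
  shows "inj_on (cycle_edge c) {..<length c}"
proof (rule inj_onI, rule ccontr)
  fix i j assume ij: "i \<in> {..<length c}" "j \<in> {..<length c}"
    and eq: "cycle_edge c i = cycle_edge c j" and "i \<noteq> j"
  let ?m = "length c"
  have c: "?m \<ge> 3" "distinct c" using assms by (auto simp: is_cycle_def)
  have "i < ?m" "j < ?m" using ij by auto
  have "0 < ?m" using c(1) by linarith
  then have succ: "Suc i mod ?m < ?m" "Suc j mod ?m < ?m"
    using mod_less_divisor by blast+
  from c have "c ! i \<noteq> c ! j" using ij \<open>i \<noteq> j\<close> by (simp add: nth_eq_iff_index_eq)
  then have "c ! i = c ! (Suc j mod ?m)" "c ! j = c ! (Suc i mod ?m)"
    using eq by (auto simp: cycle_edge_def doubleton_eq_iff)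
  then have succ_idx: "i = Suc j mod ?m" "j = Suc i mod ?m"
    using c ij succ by (simp_all add: nth_eq_iff_index_eq)
  \<comment> \<open>edges i and j would be each other's successors, so the cycle would have length 2\<close>
  then have "Suc (Suc i) mod ?m = i mod ?m"
    using \<open>i < ?m\<close> by (metis mod_Suc_eq mod_less)
  then have "?m dvd 2"
    using mod_eq_dvd_iff_nat[of i "Suc (Suc i)" ?m] by simp
  then have "?m \<le> 2"
    by (rule dvd_imp_le) simp
  with c(1) show False
    by simp
qed

lemma rtrancl_adj_along_cycle:
  assumes "is_cycle E c"
    and "\<forall>t<n. cycle_edge c ((a + t) mod length c) \<notin> D"
  shows "(c ! (a mod length c), c ! ((a + n) mod length c)) \<in> (adj (E - D))\<^sup>*"
  using assms(2)
proof (induction n)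
  case 0
  then show ?case by simp
next
  case (Suc n)
  let ?i = "(a + n) mod length c"
  have "length c > 0" using assms(1) by (auto simp: is_cycle_def)
  then have "(c ! ?i, c ! (Suc ?i mod length c)) \<in> adj (E - D)"
    using Suc.prems by (intro cycle_edge_in_adj[OF assms(1)]) auto
  moreover have "Suc ?i mod length c = (a + Suc n) mod length c"
    by (simp add: mod_Suc_eq)
  ultimately show ?case
    using Suc by (metis less_SucI rtrancl_into_rtrancl)
qed

lemma cycle_without_edge_at_connected:
  assumes cyc: "is_cycle E c" and j: "j < length c"
    and D: "\<forall>t<length c. t \<noteq> j \<longrightarrow> cycle_edge c t \<notin> D"
    and xy: "x \<in> set c" "y \<in> set c"
  shows "(x, y) \<in> (adj (E - D))\<^sup>*"
proof -
  let ?m = "length c" and ?R = "(adj (E - D))\<^sup>*"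
  let ?u = "c ! (Suc j mod ?m)"
  have from_u: "(?u, c ! i) \<in> ?R" if "i < ?m" for i
  proof -
    define n where "n = (i + ?m - Suc j) mod ?m"
    have "0 < ?m" using j by linarith
    then have "n < ?m" by (simp add: n_def)
    \<comment> \<open>walking forward from the far end of edge j, the first m - 1 steps never use edge j\<close>
    have "(Suc j + t) mod ?m \<noteq> j" if "t < n" for t
      using \<open>n < ?m\<close> that j by (auto simp: mod_if)
    then have walk: "\<forall>t<n. cycle_edge c ((Suc j + t) mod ?m) \<notin> D"
      using D mod_less_divisor[OF \<open>0 < ?m\<close>] by blast
    have "Suc j + (i + ?m - Suc j) = i + ?m"
      using j by linarith
    then have "(Suc j + n) mod ?m = i"
      unfolding n_def using \<open>i < ?m\<close> by (metis mod_add_right_eq mod_add_self2 mod_less)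
    then show ?thesis
      using rtrancl_adj_along_cycle[OF cyc walk] j by simp
  qed
  obtain i i' where "i < ?m" "x = c ! i" "i' < ?m" "y = c ! i'"
    using xy by (auto simp: in_set_conv_nth)
  then show ?thesis
    using from_u sym_rtrancl[OF sym_adj] by (meson rtrancl_trans symD)
qed

lemma cycle_without_edge_connected:
  assumes cyc: "is_cycle E c" and D: "cycle_edges c \<inter> D \<subseteq> {e}"
    and xy: "x \<in> set c" "y \<in> set c"
  shows "(x, y) \<in> (adj (E - D))\<^sup>*"
proof -
  have m: "0 < length c" using cyc by (auto simp: is_cycle_def)
  obtain j where "j < length c" "\<forall>t<length c. t \<noteq> j \<longrightarrow> cycle_edge c t \<notin> D"
  proof (cases "e \<in> cycle_edges c")
    case True
    then obtain j where "j < length c" "e = cycle_edge c j"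
      by (auto simp: cycle_edges_eq_image)
    moreover have "cycle_edge c t \<notin> D" if "t < length c" "t \<noteq> j" for t
    proof -
      have "cycle_edge c t \<noteq> e"
        using inj_on_cycle_edge[OF cyc] that \<open>j < length c\<close> \<open>e = cycle_edge c j\<close>
        by (simp add: inj_on_eq_iff)
      then show ?thesis
        using D that(1) by (auto simp: cycle_edges_eq_image)
    qed
    ultimately show ?thesis
      using that by blast
  next
    case False
    then show ?thesis
      using that[of 0] m D by (auto simp: cycle_edges_eq_image)
  qed
  then show ?thesis
    using cycle_without_edge_at_connected[OF cyc] xy by blast
qed

lemma cycle_has_other_vertex:
  assumes "is_cycle E c"
  shows "\<exists>w\<in>set c. w \<noteq> v"
proof -
  have "card (set c) \<ge> 3"
    using assms by (simp add: is_cycle_def distinct_card)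
  moreover have "card (set c) \<le> 1" if "set c \<subseteq> {v}"
    using card_mono[OF _ that] by simp
  ultimately show ?thesis by force
qed

lemma k_evadible_if_edge_disjoint_cycles_through:
  assumes v: "v \<in> V"
    and cyc: "\<forall>i<k. is_cycle E (C i) \<and> v \<in> set (C i)"
    and disj: "\<forall>i<k. \<forall>j<k. i \<noteq> j \<longrightarrow> cycle_edges (C i) \<inter> cycle_edges (C j) = {}"
  shows "k_evadible V E k"
proof -
  have "\<forall>es. \<exists>i. length es < k \<longrightarrow> i < k \<and> cycle_edges (C i) \<inter> set es = {}"
    using exists_disjoint_from_small_set[OF disj] card_length
    by (meson List.finite_set le_less_trans)
  then obtain intact where intact: "\<And>es. length es < k \<Longrightarrow>
      intact es < k \<and> cycle_edges (C (intact es)) \<inter> set es = {}"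
    by metis
  have "\<forall>i. \<exists>w. i < k \<longrightarrow> w \<in> set (C i) \<and> w \<noteq> v"
    using cyc cycle_has_other_vertex by metis
  then obtain w where w: "\<And>i. i < k \<Longrightarrow> w i \<in> set (C i) \<and> w i \<noteq> v"
    by metis
  define \<sigma> where "\<sigma> es = (if even (length es) then v else w (intact es))" for es :: "'a set list"
  have move: "\<sigma> es \<noteq> \<sigma> (butlast es) \<and> (\<sigma> (butlast es), \<sigma> es) \<in> (adj (E - set es))\<^sup>*"
    if es: "es \<noteq> []" "length es < k" for es
  proof (cases "even (length es)")
    case True
    let ?i = "intact (butlast es)"
    have "odd (length (butlast es))"
      using True es(1) by (cases es) auto
    then have \<sigma>: "\<sigma> (butlast es) = w ?i" "\<sigma> es = v"
      using True by (simp_all add: \<sigma>_def)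
    have i: "?i < k" "cycle_edges (C ?i) \<inter> set (butlast es) = {}"
      using intact[of "butlast es"] es(2) by auto
    \<comment> \<open>since the cat left v, the herder has cut at most one edge of the cycle it used\<close>
    then have "cycle_edges (C ?i) \<inter> set es \<subseteq> {last es}"
      using set_eq_insert_last_butlast[OF es(1)] by blast
    moreover have "is_cycle E (C ?i)" "w ?i \<in> set (C ?i)" "v \<in> set (C ?i)"
      using cyc w i(1) by auto
    ultimately have "(w ?i, v) \<in> (adj (E - set es))\<^sup>*"
      by (blast intro: cycle_without_edge_connected)
    then show ?thesis
      using \<sigma> w[OF i(1)] by auto
  next
    case False
    let ?i = "intact es"
    have "even (length (butlast es))"
      using False es(1) by (cases es) auto
    then have \<sigma>: "\<sigma> (butlast es) = v" "\<sigma> es = w ?i"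
      using False by (simp_all add: \<sigma>_def)
    have i: "?i < k" "cycle_edges (C ?i) \<inter> set es \<subseteq> {last es}"
      using intact es(2) by auto
    moreover have "is_cycle E (C ?i)" "w ?i \<in> set (C ?i)" "v \<in> set (C ?i)"
      using cyc w i(1) by auto
    ultimately have "(v, w ?i) \<in> (adj (E - set es))\<^sup>*"
      by (blast intro: cycle_without_edge_connected)
    then show ?thesis
      using \<sigma> w[OF i(1)] by auto
  qed
  have "length es < k" if "es \<noteq> []" "length es \<le> k - 1" for es :: "'a set list"
    using that by (cases es) auto
  moreover have "\<sigma> [] \<in> V"
    using v by (simp add: \<sigma>_def)
  ultimately show ?thesis
    unfolding k_evadible_def using move by blast
qed

theorem mainTheorem17:
  fixes V :: "'a set" and E :: "'a set set"
  assumes "simple_graph V E"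
    and "\<forall>k::nat. \<exists>v \<in> V. \<exists>C :: nat \<Rightarrow> 'a list.
           (\<forall>i < k. is_cycle E (C i) \<and> v \<in> set (C i)) \<and>
           (\<forall>i < k. \<forall>j < k. i \<noteq> j \<longrightarrow> cycle_edges (C i) \<inter> cycle_edges (C j) = {})"
  shows "omega_evadible V E"
  unfolding omega_evadible_def
proof
  fix k :: nat
  obtain v C where "v \<in> V" "\<forall>i<k. is_cycle E (C i) \<and> v \<in> set (C i)"
    "\<forall>i<k. \<forall>j<k. i \<noteq> j \<longrightarrow> cycle_edges (C i) \<inter> cycle_edges (C j) = {}"
    using spec[OF assms(2), of k] by blast
  then show "k_evadible V E k"
    by (rule k_evadible_if_edge_disjoint_cycles_through)
qed

end
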